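(* Let $X$ be a Banach space and $\kappa$ an infinite cardinal. If $X$ is $\mathrm{ASQ}_{<\kappa}$, then $X$ has the $\mathrm{SD2P}_{<\kappa}$. Moreover, if $\kappa$ is uncountable and $X$ is $\mathrm{SQ}_{<\kappa}$, then $X$ has the $1$-$\mathrm{ASD2P}_{<\kappa}$.
   Context: A Banach space $X$ is $\mathrm{ASQ}_{<\kappa}$ if for every set $A\subset S_X$ with $|A|<\kappa$ and every $\varepsilon>0$ there exists $y\in S_X$ with $\|x\pm y\|\le 1+\varepsilon$ for all $x\in A$; it is $\mathrm{SQ}_{<\kappa}$ if for every such $A$ there exists $y\in S_X$ with $\|x\pm y\|\le 1$ for all $x\in A$. For $\delta>0$, a set $B\subset S_X$ is said to $\delta$-norm a set $A\subset S_{X^*}$ if $\sup_{x\in B}y^*(x)\ge\delta$ for every $y^*\in A$. $X$ has the $\mathrm{SD2P}_{<\kappa}$ if for every $A\subset S_{X^*}$ with $|A|<\kappa$ and every $\varepsilon>0$ there exist $B\subset S_X$ and $x^*\in S_{X^*}$ such that $x^*(x)\ge 1-\varepsilon$ for all $x\in B$ and $B$ $(1-\varepsilon)$-norms $A$. $X$ has the $1$-$\mathrm{ASD2P}_{<\kappa}$ if for every $A\subset S_{X^*}$ with $|A|<\kappa$ there exist $B\subset S_X$ and $x^*\in S_{X^*}$ such that $x^*(x)=1$ for all $x\in B$ and $B$ $1$-norms $A$. *)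

theory Defs
  imports "HOL-Analysis.Analysis"
begin

text \<open>Real Banach spaces are types of class banach; the dual X* is the type
  of bounded linear functionals (bounded linear maps into real) with the operator norm.
  A cardinal kappa is represented by a cardinal order relation on some type.\<close>

definition unit_sphere :: "'a::real_normed_vector set" where
  "unit_sphere = {x. norm x = 1}"

definition ASQ_lt :: "'k rel \<Rightarrow> 'a::banach itself \<Rightarrow> bool" where
  "ASQ_lt \<kappa> _ \<longleftrightarrow>
     (\<forall>A::'a set. A \<subseteq> unit_sphere \<and> (card_of A, \<kappa>) \<in> ordLess \<longrightarrow>
        (\<forall>\<epsilon>>0. \<exists>y\<in>unit_sphere. \<forall>x\<in>A. norm (x + y) \<le> 1 + \<epsilon> \<and> norm (x - y) \<le> 1 + \<epsilon>))"

definition SQ_lt :: "'k rel \<Rightarrow> 'a::banach itself \<Rightarrow> bool" where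
  "SQ_lt \<kappa> _ \<longleftrightarrow>
     (\<forall>A::'a set. A \<subseteq> unit_sphere \<and> (card_of A, \<kappa>) \<in> ordLess \<longrightarrow>
        (\<exists>y\<in>unit_sphere. \<forall>x\<in>A. norm (x + y) \<le> 1 \<and> norm (x - y) \<le> 1))"

text \<open>B delta-norms A: sup over x in B of y*(x) is at least delta, for each y* in A
  (sup written out via approximation).\<close>
definition delta_norms :: "real \<Rightarrow> 'a::real_normed_vector set \<Rightarrow> ('a \<Rightarrow>\<^sub>L real) set \<Rightarrow> bool" where
  "delta_norms \<delta> B A \<longleftrightarrow>
     (\<forall>f\<in>A. \<forall>\<eta>>0. \<exists>x\<in>B. blinfun_apply f x > \<delta> - \<eta>)"

definition SD2P_lt :: "'k rel \<Rightarrow> 'a::banach itself \<Rightarrow> bool" where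
  "SD2P_lt \<kappa> _ \<longleftrightarrow>
     (\<forall>A::('a \<Rightarrow>\<^sub>L real) set. A \<subseteq> unit_sphere \<and> (card_of A, \<kappa>) \<in> ordLess \<longrightarrow>
        (\<forall>\<epsilon>>0. \<exists>B::'a set. \<exists>g::'a \<Rightarrow>\<^sub>L real. B \<subseteq> unit_sphere \<and> g \<in> unit_sphere \<and>
            (\<forall>x\<in>B. blinfun_apply g x \<ge> 1 - \<epsilon>) \<and> delta_norms (1 - \<epsilon>) B A))"

definition one_ASD2P_lt :: "'k rel \<Rightarrow> 'a::banach itself \<Rightarrow> bool" where
  "one_ASD2P_lt \<kappa> _ \<longleftrightarrow>
     (\<forall>A::('a \<Rightarrow>\<^sub>L real) set. A \<subseteq> unit_sphere \<and> (card_of A, \<kappa>) \<in> ordLess \<longrightarrow>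
        (\<exists>B::'a set. \<exists>g::'a \<Rightarrow>\<^sub>L real. B \<subseteq> unit_sphere \<and> g \<in> unit_sphere \<and>
            (\<forall>x\<in>B. blinfun_apply g x = 1) \<and> delta_norms 1 B A))"

end

(*
  Given the norm-one functionals f in A, pick unit vectors x_f almost normed by them and a unit
  vector y that is (almost) square for all x_f simultaneously, and let g be a norm-one functional
  with g y = 1 (Hahn-Banach).  Then f (x_f + y) \<ge> 2 f x_f - \<parallel>x_f - y\<parallel> and
  g (x_f + y) \<ge> 2 - \<parallel>y - x_f\<parallel>, so the normalised vectors x_f + y lie in a slice of g
  and almost norm A.  For SQ these estimates are exact: each x_f + y lies on the face {g = 1} of
  the sphere, and taking countably many x_f per f (still fewer than \<kappa> vectors, as \<kappa> is
  uncountable) makes that face 1-norming for A.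
*)

theory Submission
  imports Defs
begin

unbundle cardinal_syntax

(* Partially defined linear functionals dominated by the norm, encoded by their graphs. *)
definition norm_dominated_graph :: "('a::real_normed_vector \<times> real) set \<Rightarrow> bool" where
  "norm_dominated_graph G \<longleftrightarrow> subspace G \<and> (\<forall>(x, a)\<in>G. a \<le> norm x)"

lemma norm_dominated_graph_unique:
  assumes G: "norm_dominated_graph G" and "(x, a) \<in> G" "(x, b) \<in> G"
  shows "a = b"
proof -
  have "subspace G" "\<forall>(x, a)\<in>G. a \<le> norm x"
    using G by (auto simp: norm_dominated_graph_def)
  moreover have "(0, a - b) \<in> G" "(0, b - a) \<in> G"
    using subspace_diff[OF \<open>subspace G\<close>] assms(2,3) by force+
  ultimately have "a - b \<le> 0" "b - a \<le> 0"
    by fastforce+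
  then show ?thesis by simp
qed

lemma subspace_Union_chain:
  assumes "\<C> \<noteq> {}" "subset.chain \<A> \<C>" "\<And>S. S \<in> \<C> \<Longrightarrow> subspace S"
  shows "subspace (\<Union>\<C>)"
  unfolding subspace_def
proof (intro conjI ballI allI)
  show "0 \<in> \<Union>\<C>"
    using assms(1,3) subspace_0 by blast
next
  fix x z assume "x \<in> \<Union>\<C>" "z \<in> \<Union>\<C>"
  then obtain S where "S \<in> \<C>" "{x, z} \<subseteq> S"
    using finite_subset_Union_chain[of "{x, z}" \<C> \<A>] assms(1,2) by auto
  then show "x + z \<in> \<Union>\<C>"
    using assms(3) subspace_add by blast
next
  fix c x assume "x \<in> \<Union>\<C>"
  then show "c *\<^sub>R x \<in> \<Union>\<C>"
    using assms(3) subspace_scale by blast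
qed

lemma norm_dominated_graph_Union_chain:
  assumes "\<C> \<noteq> {}" "subset.chain \<A> \<C>" "\<And>G. G \<in> \<C> \<Longrightarrow> norm_dominated_graph G"
  shows "norm_dominated_graph (\<Union>\<C>)"
  using assms subspace_Union_chain[OF assms(1,2)]
  unfolding norm_dominated_graph_def by fast

lemma norm_scaleR_add_eq:
  fixes x v :: "'a::real_normed_vector"
  assumes "k \<noteq> 0"
  shows "norm (x + k *\<^sub>R v) = \<bar>k\<bar> * norm (x /\<^sub>R k + v)"
proof -
  have "x + k *\<^sub>R v = k *\<^sub>R (x /\<^sub>R k + v)"
    using assms by (simp add: algebra_simps)
  then show ?thesis by simp
qed

lemma norm_dominated_graph_insert_le:
  assumes M: "norm_dominated_graph M" and xa: "(x, a) \<in> M"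
    and lower: "\<And>u a. (u, a) \<in> M \<Longrightarrow> a - norm (u - x\<^sub>0) \<le> c"
    and upper: "\<And>v b. (v, b) \<in> M \<Longrightarrow> c \<le> norm (v + x\<^sub>0) - b"
  shows "a + k * c \<le> norm (x + k *\<^sub>R x\<^sub>0)"
proof -
  have "subspace M" and dom: "\<And>x a. (x, a) \<in> M \<Longrightarrow> a \<le> norm x"
    using M by (auto simp: norm_dominated_graph_def)
  show ?thesis
  proof (cases k "0::real" rule: linorder_cases)
    case less
    have "(- (x /\<^sub>R k), - (a / k)) \<in> M"
      using subspace_scale[OF \<open>subspace M\<close> xa, of "- inverse k"] by (simp add: divide_inverse_commute)
    then have "- (a / k) - norm (x /\<^sub>R k + x\<^sub>0) \<le> c"
      using lower[of "- (x /\<^sub>R k)" "- (a / k)"] by (simp add: norm_minus_commute add.commute)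
    then show ?thesis
      using less norm_scaleR_add_eq[of k x x\<^sub>0] by (simp add: field_simps)
  next
    case equal
    then show ?thesis using dom[OF xa] by simp
  next
    case greater
    have "(x /\<^sub>R k, a / k) \<in> M"
      using subspace_scale[OF \<open>subspace M\<close> xa, of "inverse k"] by (simp add: divide_inverse_commute)
    then have "c \<le> norm (x /\<^sub>R k + x\<^sub>0) - a / k"
      using upper by simp
    then show ?thesis
      using greater norm_scaleR_add_eq[of k x x\<^sub>0] by (simp add: field_simps)
  qed
qed

lemma norm_dominated_graph_span_insert:
  assumes M: "norm_dominated_graph M"
    and lower: "\<And>u a. (u, a) \<in> M \<Longrightarrow> a - norm (u - x\<^sub>0) \<le> c"
    and upper: "\<And>v b. (v, b) \<in> M \<Longrightarrow> c \<le> norm (v + x\<^sub>0) - b"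
  shows "norm_dominated_graph (span (insert (x\<^sub>0, c) M))"
proof -
  have "snd p \<le> norm (fst p)" if p: "p \<in> span (insert (x\<^sub>0, c) M)" for p
  proof -
    have "span M = M"
      using M by (simp add: norm_dominated_graph_def)
    with p obtain k where "p - k *\<^sub>R (x\<^sub>0, c) \<in> M"
      unfolding span_insert by blast
    then have "(fst p - k *\<^sub>R x\<^sub>0, snd p - k * c) \<in> M"
      by (cases p) simp
    from norm_dominated_graph_insert_le[OF M this lower upper, of k] show ?thesis
      by simp
  qed
  then show ?thesis
    unfolding norm_dominated_graph_def by auto
qed

lemma norm_dominated_graph_extend:
  assumes M: "norm_dominated_graph M"
  obtains c where "norm_dominated_graph (span (insert (x\<^sub>0, c) M))"
proof -
  have "subspace M" and dom: "\<And>x a. (x, a) \<in> M \<Longrightarrow> a \<le> norm x"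
    using M by (auto simp: norm_dominated_graph_def)
  have "(0, 0) \<in> M"
    using subspace_0[OF \<open>subspace M\<close>] by (simp add: zero_prod_def)
  have separated: "a - norm (u - x\<^sub>0) \<le> norm (v + x\<^sub>0) - b" if "(u, a) \<in> M" "(v, b) \<in> M" for u a v b
  proof -
    have "a + b \<le> norm (u + v)"
      using dom subspace_add[OF \<open>subspace M\<close> that] by simp
    also have "\<dots> \<le> norm (u - x\<^sub>0) + norm (v + x\<^sub>0)"
      using norm_triangle_ineq[of "u - x\<^sub>0" "v + x\<^sub>0"] by simp
    finally show ?thesis by simp
  qed
  define L where "L = (\<lambda>(u, a). a - norm (u - x\<^sub>0)) ` M"
  have "L \<noteq> {}"
    using \<open>(0, 0) \<in> M\<close> by (auto simp: L_def)
  moreover have "bdd_above L"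
    unfolding bdd_above_def L_def using separated[OF _ \<open>(0, 0) \<in> M\<close>]
    by (intro exI[of _ "norm x\<^sub>0"]) auto
  ultimately show ?thesis
    using separated by (intro that[of "Sup L"] norm_dominated_graph_span_insert[OF M])
      (auto simp: L_def intro!: cSup_upper cSup_least)
qed

lemma norm_dominated_graph_total_blinfun:
  assumes M: "norm_dominated_graph M" and total: "\<And>x. \<exists>a. (x, a) \<in> M"
  obtains g :: "'a::real_normed_vector \<Rightarrow>\<^sub>L real"
  where "norm g \<le> 1" "\<And>x. (x, g x) \<in> M"
proof -
  have "subspace M" and dom: "\<And>x a. (x, a) \<in> M \<Longrightarrow> a \<le> norm x"
    using M by (auto simp: norm_dominated_graph_def)
  define h where "h x = (SOME a. (x, a) \<in> M)" for x
  have hM: "(x, h x) \<in> M" for x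
    unfolding h_def using total by (rule someI_ex)
  have add: "h (x + z) = h x + h z" for x z
    using subspace_add[OF \<open>subspace M\<close> hM[of x] hM[of z]] hM[of "x + z"]
      norm_dominated_graph_unique[OF M] by simp
  have scale: "h (r *\<^sub>R x) = r *\<^sub>R h x" for r x
    using subspace_scale[OF \<open>subspace M\<close> hM[of x], of r] hM[of "r *\<^sub>R x"]
      norm_dominated_graph_unique[OF M] by simp
  have bound: "norm (h x) \<le> norm x * 1" for x
    using dom[OF hM[of x]] dom[OF hM[of "- x"]] scale[of "- 1" x] by simp
  have "bounded_linear h"
    using add scale bound by (rule bounded_linear_intro)
  then show ?thesis
    using bound hM by (intro that[of "Blinfun h"] norm_blinfun_bound) (auto simp: bounded_linear_Blinfun_apply)
qed

theorem Hahn_Banach_norming_functional: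
  fixes y :: "'a::real_normed_vector"
  assumes "y \<noteq> 0"
  obtains g :: "'a \<Rightarrow>\<^sub>L real" where "norm g = 1" "g y = norm y"
proof -
  define \<G> where "\<G> = {G. norm_dominated_graph G \<and> (y, norm y) \<in> G}"
  have "\<forall>(x, a)\<in>span {(y, norm y)}. a \<le> norm x"
    by (auto simp: span_singleton mult_right_mono)
  then have "span {(y, norm y)} \<in> \<G>"
    by (simp add: \<G>_def norm_dominated_graph_def span_base)
  moreover have "\<Union>\<C> \<in> \<G>" if "\<C> \<noteq> {}" "subset.chain \<G> \<C>" for \<C>
    using that norm_dominated_graph_Union_chain[OF that] by (auto simp: \<G>_def subset.chain_def)
  ultimately obtain M where M: "M \<in> \<G>" and maximal: "\<And>G. G \<in> \<G> \<Longrightarrow> M \<subseteq> G \<Longrightarrow> G = M"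
    using subset_Zorn_nonempty[of \<G>] by blast
  have total: "\<exists>a. (x, a) \<in> M" for x
  proof -
    obtain c where "norm_dominated_graph (span (insert (x, c) M))"
      using norm_dominated_graph_extend M by (auto simp: \<G>_def)
    moreover have "M \<subseteq> span (insert (x, c) M)"
      using span_superset by blast
    ultimately have "span (insert (x, c) M) = M"
      using M by (intro maximal) (auto simp: \<G>_def)
    then show ?thesis
      using span_superset[of "insert (x, c) M"] by blast
  qed
  obtain g :: "'a \<Rightarrow>\<^sub>L real" where "norm g \<le> 1" "\<And>x. (x, g x) \<in> M"
    using norm_dominated_graph_total_blinfun total M by (auto simp: \<G>_def)
  moreover have "g y = norm y"
    using M \<open>\<And>x. (x, g x) \<in> M\<close> by (auto simp: \<G>_def intro: norm_dominated_graph_unique)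
  moreover have "norm y \<le> norm g * norm y"
    using norm_blinfun[of g y] \<open>g y = norm y\<close> by simp
  ultimately show ?thesis
    using assms by (intro that) auto
qed

lemma unit_sphere_norming_functional:
  fixes y :: "'a::real_normed_vector"
  assumes "y \<in> unit_sphere"
  obtains g :: "'a \<Rightarrow>\<^sub>L real" where "norm g = 1" "g y = 1"
proof -
  have "norm y = 1"
    using assms by (simp add: unit_sphere_def)
  then have "y \<noteq> 0"
    by (metis norm_zero zero_neq_one)
  then show ?thesis
    using Hahn_Banach_norming_functional \<open>norm y = 1\<close> that by metis
qed

lemma blinfun_apply_le_norm:
  fixes f :: "'a::real_normed_vector \<Rightarrow>\<^sub>L real"
  assumes "norm f \<le> 1"
  shows "f x \<le> norm x"
  using norm_blinfun[of f x] assms mult_left_le_one_le[of "norm x" "norm f"] by simp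

lemma blinfun_apply_add_ge:
  fixes f :: "'a::real_normed_vector \<Rightarrow>\<^sub>L real"
  assumes "norm f \<le> 1"
  shows "2 * f x - norm (x - y) \<le> f (x + y)"
proof -
  have "f (x - y) \<le> norm (x - y)"
    using blinfun_apply_le_norm[OF assms] .
  then show ?thesis
    by (simp add: blinfun.add_right blinfun.diff_right)
qed

lemma exists_unit_vector_almost_norming:
  fixes f :: "'a::real_normed_vector \<Rightarrow>\<^sub>L real"
  assumes "f \<noteq> 0" "0 < d"
  shows "\<exists>x\<in>unit_sphere. norm f - d < f x"
proof (rule ccontr)
  assume none: "\<not> ?thesis"
  define e where "e = min d (norm f)"
  have e: "0 < e" "e \<le> norm f"
    using assms by (auto simp: e_def)
  have unit: "f u \<le> norm f - e" if "norm u = 1" for u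
    using none that by (force simp: unit_sphere_def e_def)
  have "norm f \<le> norm f - e"
  proof (rule norm_blinfun_bound)
    show "norm (f x) \<le> (norm f - e) * norm x" for x
    proof (cases "x = 0")
      case False
      then have "f (x /\<^sub>R norm x) \<le> norm f - e" "- f (x /\<^sub>R norm x) \<le> norm f - e"
        using unit[of "x /\<^sub>R norm x"] unit[of "- (x /\<^sub>R norm x)"] by (auto simp: blinfun.minus_right)
      then have "\<bar>f x\<bar> / norm x \<le> norm f - e"
        by (simp add: blinfun.scaleR_right abs_le_iff divide_inverse_commute)
      then show ?thesis
        using False by (simp add: field_simps)
    qed simp
  qed (use e in simp)
  then show False
    using e by simp
qed

lemma almost_norming_unit_vectors:
  fixes F :: "'i \<Rightarrow> ('a::real_normed_vector \<Rightarrow>\<^sub>L real)"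
  assumes "\<forall>i\<in>I. F i \<in> unit_sphere \<and> 0 < d i"
  obtains X where "\<forall>i\<in>I. X i \<in> unit_sphere \<and> 1 - d i < blinfun_apply (F i) (X i)"
proof -
  have "\<forall>i\<in>I. \<exists>x. x \<in> unit_sphere \<and> 1 - d i < blinfun_apply (F i) x"
  proof
    fix i assume "i \<in> I"
    then have "F i \<noteq> 0" "norm (F i) = 1" "0 < d i"
      using assms by (auto simp: unit_sphere_def)
    then show "\<exists>x. x \<in> unit_sphere \<and> 1 - d i < blinfun_apply (F i) x"
      using exists_unit_vector_almost_norming[of "F i" "d i"] by fastforce
  qed
  from bchoice[OF this] obtain X :: "'i \<Rightarrow> 'a"
    where "\<forall>i\<in>I. X i \<in> unit_sphere \<and> 1 - d i < blinfun_apply (F i) (X i)"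
    by blast
  then show ?thesis
    by (rule that)
qed

lemma blinfun_apply_normalized_ge:
  fixes f :: "'a::real_normed_vector \<Rightarrow>\<^sub>L real"
  assumes "0 \<le> d" "3 * d \<le> 1" "1 - 3 * d \<le> f v" "0 < norm v" "norm v \<le> 1 + d"
  shows "1 - 4 * d \<le> f (v /\<^sub>R norm v)"
proof -
  have "(1 - 4 * d) * (1 + d) \<le> 1 - 3 * d"
    using assms(1) by (simp add: algebra_simps)
  then have "1 - 4 * d \<le> (1 - 3 * d) / (1 + d)"
    using assms(1) by (simp add: pos_le_divide_eq)
  also have "\<dots> \<le> f v / norm v"
    using assms by (intro frac_le) auto
  finally show ?thesis
    by (simp add: blinfun.scaleR_right divide_inverse_commute)
qed

lemma almost_square_slice_point:
  fixes f g :: "'a::real_normed_vector \<Rightarrow>\<^sub>L real"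
  assumes "norm f \<le> 1" "norm g \<le> 1" "g y = 1" "1 - d < f x"
    and "norm (x + y) \<le> 1 + d" "norm (x - y) \<le> 1 + d" "0 \<le> d" "3 * d \<le> 1"
  shows "\<exists>u\<in>unit_sphere. 1 - 4 * d \<le> f u \<and> 1 - 4 * d \<le> g u"
proof -
  have f: "1 - 3 * d \<le> f (x + y)"
    using blinfun_apply_add_ge[OF assms(1), of x y] assms(4,6) by linarith
  have g: "1 - d \<le> g (x + y)"
    using blinfun_apply_add_ge[OF assms(2), of y x] assms(3,6) by (simp add: norm_minus_commute add.commute)
  have "g (x + y) \<le> norm (x + y)"
    using blinfun_apply_le_norm[OF assms(2)] .
  then have "0 < norm (x + y)"
    using g assms(8) by linarith
  then show ?thesis
    using f g assms(5,7,8)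
    by (intro bexI[of _ "(x + y) /\<^sub>R norm (x + y)"] conjI blinfun_apply_normalized_ge)
      (auto simp: unit_sphere_def)
qed

lemma square_face_point:
  fixes f g :: "'a::real_normed_vector \<Rightarrow>\<^sub>L real"
  assumes "norm f \<le> 1" "norm g \<le> 1" "g y = 1" "norm (x + y) \<le> 1" "norm (x - y) \<le> 1"
  shows "x + y \<in> unit_sphere" "g (x + y) = 1" "2 * f x - 1 \<le> f (x + y)"
proof -
  have "1 \<le> g (x + y)"
    using blinfun_apply_add_ge[OF assms(2), of y x] assms(3,5) by (simp add: norm_minus_commute add.commute)
  moreover have "g (x + y) \<le> norm (x + y)"
    using blinfun_apply_le_norm[OF assms(2)] .
  ultimately show "x + y \<in> unit_sphere" "g (x + y) = 1"
    using assms(4) by (auto simp: unit_sphere_def)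
  show "2 * f x - 1 \<le> f (x + y)"
    using blinfun_apply_add_ge[OF assms(1), of x y] assms(5) by linarith
qed

lemma delta_norms_if_attained:
  assumes "\<And>f. f \<in> A \<Longrightarrow> \<exists>x\<in>B. \<delta> \<le> blinfun_apply f x"
  shows "delta_norms \<delta> B A"
  unfolding delta_norms_def
proof (intro ballI allI impI)
  fix f and \<eta> :: real
  assume "f \<in> A" "0 < \<eta>"
  then show "\<exists>x\<in>B. \<delta> - \<eta> < blinfun_apply f x"
    using assms[of f] by force
qed

lemma nat_ordLess_uncountable_Card_order:
  assumes "Card_order \<kappa>" "uncountable (Field \<kappa>)"
  shows "|UNIV :: nat set| <o \<kappa>"
proof (rule ccontr)
  assume "\<not> ?thesis"
  then have "\<kappa> \<le>o |UNIV :: nat set|"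
    using not_ordLess_ordLeq card_of_Well_order card_order_on_well_order_on[OF assms(1)]
      ordLess_or_ordLeq by blast
  then have "|Field \<kappa>| \<le>o |UNIV :: nat set|"
    using card_of_Field_ordIso[OF assms(1)] ordIso_ordLeq_trans by blast
  then show False
    using assms(2) unfolding countable_def card_of_ordLeq[symmetric] by auto
qed

lemma card_of_Times_nat_ordLess:
  assumes "Card_order \<kappa>" "uncountable (Field \<kappa>)" "|A| <o \<kappa>"
  shows "|A \<times> (UNIV :: nat set)| <o \<kappa>"
proof (cases "finite A")
  case True
  then have "countable (A \<times> (UNIV :: nat set))"
    by (simp add: countable_finite)
  then have "|A \<times> (UNIV :: nat set)| \<le>o |UNIV :: nat set|"
    unfolding countable_def card_of_ordLeq[symmetric] by blast
  then show ?thesis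
    using nat_ordLess_uncountable_Card_order[OF assms(1,2)] ordLeq_ordLess_trans by blast
next
  case False
  then have "|A \<times> (UNIV :: nat set)| =o |A|"
    using card_of_Times_infinite[of A "UNIV :: nat set"] infinite_iff_card_of_nat by blast
  then show ?thesis
    using assms(3) ordIso_ordLess_trans by blast
qed

lemma ASQ_lt_imp_SD2P_lt:
  assumes "ASQ_lt \<kappa> TYPE('a::banach)"
  shows "SD2P_lt \<kappa> TYPE('a)"
  unfolding SD2P_lt_def
proof (intro allI impI)
  fix A :: "('a \<Rightarrow>\<^sub>L real) set" and \<epsilon> :: real
  assume A: "A \<subseteq> unit_sphere \<and> |A| <o \<kappa>" and "0 < \<epsilon>"
  define d where "d = min \<epsilon> 1 / 4"
  have d: "0 < d" "3 * d \<le> 1" "4 * d \<le> \<epsilon>"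
    using \<open>0 < \<epsilon>\<close> by (auto simp: d_def)
  obtain X :: "('a \<Rightarrow>\<^sub>L real) \<Rightarrow> 'a"
    where X: "\<forall>f\<in>A. X f \<in> unit_sphere \<and> 1 - d < f (X f)"
    by (rule almost_norming_unit_vectors[of A "\<lambda>f. f" "\<lambda>_. d"]) (use A d(1) in auto)
  have "X ` A \<subseteq> unit_sphere"
    using X by blast
  moreover have "|X ` A| <o \<kappa>"
    using ordLeq_ordLess_trans[OF card_of_image] A by blast
  ultimately obtain y where "y \<in> unit_sphere"
    and y: "\<forall>x\<in>X ` A. norm (x + y) \<le> 1 + d \<and> norm (x - y) \<le> 1 + d"
    using assms d(1) unfolding ASQ_lt_def by blast
  then obtain g :: "'a \<Rightarrow>\<^sub>L real" where g: "norm g = 1" "g y = 1"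
    using unit_sphere_norming_functional by blast
  define B where "B = {u \<in> unit_sphere. 1 - \<epsilon> \<le> g u}"
  have "\<exists>u\<in>B. 1 - \<epsilon> \<le> f u" if "f \<in> A" for f
  proof -
    have "norm f = 1"
      using A that by (auto simp: unit_sphere_def)
    moreover have "1 - d < f (X f)"
      using X that by blast
    moreover have "norm (X f + y) \<le> 1 + d" "norm (X f - y) \<le> 1 + d"
      using y that by auto
    ultimately obtain u where "u \<in> unit_sphere" "1 - 4 * d \<le> f u" "1 - 4 * d \<le> g u"
      using almost_square_slice_point[of f g y d "X f"] g d by auto
    then show ?thesis
      using d(3) by (auto simp: B_def)
  qed
  then have "delta_norms (1 - \<epsilon>) B A"
    by (rule delta_norms_if_attained)
  moreover have "B \<subseteq> unit_sphere" "g \<in> unit_sphere" "\<forall>x\<in>B. 1 - \<epsilon> \<le> g x"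
    using g by (auto simp: B_def unit_sphere_def)
  ultimately show "\<exists>B (g :: 'a \<Rightarrow>\<^sub>L real). B \<subseteq> unit_sphere \<and> g \<in> unit_sphere \<and>
      (\<forall>x\<in>B. 1 - \<epsilon> \<le> blinfun_apply g x) \<and> delta_norms (1 - \<epsilon>) B A"
    by blast
qed

lemma SQ_lt_imp_one_ASD2P_lt:
  assumes "Card_order \<kappa>" "uncountable (Field \<kappa>)" "SQ_lt \<kappa> TYPE('a::banach)"
  shows "one_ASD2P_lt \<kappa> TYPE('a)"
  unfolding one_ASD2P_lt_def
proof (intro allI impI)
  fix A :: "('a \<Rightarrow>\<^sub>L real) set"
  assume A: "A \<subseteq> unit_sphere \<and> |A| <o \<kappa>"
  obtain X :: "('a \<Rightarrow>\<^sub>L real) \<times> nat \<Rightarrow> 'a"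
    where X: "\<forall>p\<in>A \<times> UNIV. X p \<in> unit_sphere \<and> 1 - inverse (real (Suc (snd p))) < fst p (X p)"
    by (rule almost_norming_unit_vectors[of "A \<times> UNIV" fst "\<lambda>p. inverse (real (Suc (snd p)))"])
      (use A in auto)
  have "X ` (A \<times> UNIV) \<subseteq> unit_sphere"
    using X by blast
  moreover have "|X ` (A \<times> UNIV)| <o \<kappa>"
    using ordLeq_ordLess_trans[OF card_of_image card_of_Times_nat_ordLess[OF assms(1,2)]] A by blast
  ultimately obtain y where "y \<in> unit_sphere"
    and y: "\<forall>x\<in>X ` (A \<times> UNIV). norm (x + y) \<le> 1 \<and> norm (x - y) \<le> 1"
    using assms(3) unfolding SQ_lt_def by blast
  then obtain g :: "'a \<Rightarrow>\<^sub>L real" where g: "norm g = 1" "g y = 1"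
    using unit_sphere_norming_functional by blast
  define B where "B = {u \<in> unit_sphere. g u = 1}"
  have "delta_norms 1 B A"
    unfolding delta_norms_def
  proof (intro ballI allI impI)
    fix f and \<eta> :: real
    assume "f \<in> A" "0 < \<eta>"
    obtain n where n: "inverse (real (Suc n)) < \<eta> / 2"
      using reals_Archimedean[of "\<eta> / 2"] \<open>0 < \<eta>\<close> by auto
    have "norm f = 1"
      using A \<open>f \<in> A\<close> by (auto simp: unit_sphere_def)
    moreover have "norm (X (f, n) + y) \<le> 1" "norm (X (f, n) - y) \<le> 1"
      using y \<open>f \<in> A\<close> by auto
    ultimately have "X (f, n) + y \<in> B" "2 * f (X (f, n)) - 1 \<le> f (X (f, n) + y)"
      using square_face_point[of f g y "X (f, n)"] g by (auto simp: B_def)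
    moreover have "1 - inverse (real (Suc n)) < f (X (f, n))"
      using X \<open>f \<in> A\<close> by auto
    ultimately show "\<exists>x\<in>B. 1 - \<eta> < f x"
      using n by (intro bexI[of _ "X (f, n) + y"]) auto
  qed
  moreover have "B \<subseteq> unit_sphere" "g \<in> unit_sphere" "\<forall>x\<in>B. g x = 1"
    using g by (auto simp: B_def unit_sphere_def)
  ultimately show "\<exists>B (g :: 'a \<Rightarrow>\<^sub>L real). B \<subseteq> unit_sphere \<and> g \<in> unit_sphere \<and>
      (\<forall>x\<in>B. blinfun_apply g x = 1) \<and> delta_norms 1 B A"
    by blast
qed

theorem proposition5p3:
  fixes \<kappa> :: "'k rel"
  assumes "Card_order \<kappa>" and "infinite (Field \<kappa>)"
  shows "(ASQ_lt \<kappa> TYPE('a::banach) \<longrightarrow> SD2P_lt \<kappa> TYPE('a)) \<and>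
         (uncountable (Field \<kappa>) \<and> SQ_lt \<kappa> TYPE('a) \<longrightarrow> one_ASD2P_lt \<kappa> TYPE('a))"
  using ASQ_lt_imp_SD2P_lt SQ_lt_imp_one_ASD2P_lt[OF assms(1)] by blast

end
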